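(* Let $\delta\in(0,1]$, $\varepsilon>0$, and let $G=(V,E)$ be a simple graph on $n$ vertices with minimal degree at least $\delta n$. Let $V=V_1\sqcup\dots\sqcup V_k$ be an $(\varepsilon,\delta,n^{1.5})$-good decomposition of $G$ with parameter $\theta$, and let $X$ be the simple random walk on $G$. Then for any $C>0$, any $i\in[k]$ and any $v\in V$, \[ \Pr_v\left(\exists t\in[1,C\sqrt n]: X_t\in V_i,\ X_{t+1}\notin V_i\right)\le\frac{C\theta^2\varepsilon^9}{\delta^2}. \] Furthermore, for any $C>0$ and $i\in[k]$ there exists a set $V_i'\subseteq V_i$ with $|V_i'|\ge\delta^4n/80$ such that for every $v\in V_i'$, \[ \Pr_v\left(X[0,C\sqrt n]\subseteq V_i\right)\ge 1-\frac{80C\theta^2\varepsilon^9}{\delta^6}. \]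
   Context: $\deg(v,U)$ is the number of edges between $v$ and $U$, $E(A,B)$ the set of edges between $A$ and $B$, $G[U]$ the induced subgraph, and the spectral gap of a graph is $1-\lambda_2$ for the transition matrix of its simple random walk. For $\varepsilon\in(0,1)$, $\delta\in(0,1]$, $\beta>0$ and $G$ on $n$ vertices with minimal degree at least $\delta n$, a partition $V=V_1\sqcup\dots\sqcup V_k$ is an $(\varepsilon,\delta,\beta)$-good decomposition with parameter $\theta$ if $\theta\in[\varepsilon^{11\cdot 2^{2/\delta}},\varepsilon]$ and for every $i\in[k]$: (1) $k\le 2/\delta$; (2) $|V_i|\ge\delta n/2$; (3) the spectral gap of $G[V_i]$ is at least $\frac{\delta^{15}\theta\beta}{2^{31}n^2}$; (4) $\deg(v,V_i)\ge\delta^4n/40$ for all $v\in V_i$; (5) $|E(V_i,V\setminus V_i)|\le\varepsilon^9\theta^2\beta$. $X[a,b]$ denotes $\{X_j: j\in[\lceil a\rceil,\lfloor b\rfloor]\cap\mathbb N\}$ and $\Pr_v$ refers to the walk started at $v$. *)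

theory Defs
  imports "HOL-Analysis.Analysis" "Jordan_Normal_Form.Char_Poly" "HOL-Library.Multiset"
begin

definition simple_graph :: "'a set \<Rightarrow> ('a \<Rightarrow> 'a \<Rightarrow> bool) \<Rightarrow> bool" where
  "simple_graph V E \<longleftrightarrow> finite V \<and> (\<forall>u w. E u w \<longrightarrow> u \<in> V \<and> w \<in> V) \<and>
     (\<forall>u w. E u w \<longrightarrow> E w u) \<and> (\<forall>u. \<not> E u u)"

definition deg_in :: "('a \<Rightarrow> 'a \<Rightarrow> bool) \<Rightarrow> 'a \<Rightarrow> 'a set \<Rightarrow> nat" where
  "deg_in E v U = card {u \<in> U. E v u}"

text \<open>E(A,B): set of edges between A and B (as ordered pairs; for disjoint A, B this
  is in bijection with the unordered edges).\<close>
definition edges_between :: "('a \<Rightarrow> 'a \<Rightarrow> bool) \<Rightarrow> 'a set \<Rightarrow> 'a set \<Rightarrow> ('a \<times> 'a) set" where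
  "edges_between E A B = {(u, w). u \<in> A \<and> w \<in> B \<and> E u w}"

definition trans_prob :: "('a \<Rightarrow> 'a \<Rightarrow> bool) \<Rightarrow> 'a set \<Rightarrow> 'a \<Rightarrow> 'a \<Rightarrow> real" where
  "trans_prob E U u w = (if u \<in> U \<and> w \<in> U \<and> E u w then 1 / real (deg_in E u U) else 0)"

definition trans_matrix :: "('a::linorder \<Rightarrow> 'a \<Rightarrow> bool) \<Rightarrow> 'a set \<Rightarrow> real mat" where
  "trans_matrix E U = (let vs = sorted_list_of_set U in
     mat (length vs) (length vs) (\<lambda>(a, b). trans_prob E U (vs ! a) (vs ! b)))"

text \<open>Second largest eigenvalue (with multiplicity) of the transition matrix of G[U].
  The transition matrix is reversible, so all eigenvalues are real and are the real
  roots of the characteristic polynomial.\<close>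
definition lambda2 :: "('a::linorder \<Rightarrow> 'a \<Rightarrow> bool) \<Rightarrow> 'a set \<Rightarrow> real" where
  "lambda2 E U = rev (sorted_list_of_multiset (proots (char_poly (trans_matrix E U)))) ! 1"

definition spectral_gap :: "('a::linorder \<Rightarrow> 'a \<Rightarrow> bool) \<Rightarrow> 'a set \<Rightarrow> real" where
  "spectral_gap E U = 1 - lambda2 E U"

definition good_decomposition ::
  "'a::linorder set \<Rightarrow> ('a \<Rightarrow> 'a \<Rightarrow> bool) \<Rightarrow> real \<Rightarrow> real \<Rightarrow> real \<Rightarrow> nat \<Rightarrow> (nat \<Rightarrow> 'a set) \<Rightarrow> real \<Rightarrow> bool" where
  "good_decomposition V E \<epsilon> \<delta> \<beta> k Vs \<theta> \<longleftrightarrow>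
     (let n = real (card V) in
      0 < \<epsilon> \<and> \<epsilon> < 1 \<and> 0 < \<delta> \<and> \<delta> \<le> 1 \<and> 0 < \<beta> \<and>
      (\<Union>i\<in>{1..k}. Vs i) = V \<and>
      (\<forall>i\<in>{1..k}. \<forall>j\<in>{1..k}. i \<noteq> j \<longrightarrow> Vs i \<inter> Vs j = {}) \<and>
      \<epsilon> powr (11 * 2 powr (2 / \<delta>)) \<le> \<theta> \<and> \<theta> \<le> \<epsilon> \<and>
      real k \<le> 2 / \<delta> \<and>
      (\<forall>i\<in>{1..k}.
         real (card (Vs i)) \<ge> \<delta> * n / 2 \<and>
         spectral_gap E (Vs i) \<ge> \<delta> ^ 15 * \<theta> * \<beta> / (2 ^ 31 * n\<^sup>2) \<and>
         (\<forall>v\<in>Vs i. real (deg_in E v (Vs i)) \<ge> \<delta> ^ 4 * n / 40) \<and>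
         real (card (edges_between E (Vs i) (V - Vs i))) \<le> \<epsilon> ^ 9 * \<theta>\<^sup>2 * \<beta>))"

text \<open>Pr_v of an event depending on (X_0, ..., X_m) for the simple random walk on G=(V,E):
  the sum over all vertex sequences of length m+1 starting at v of the path
  probability times the indicator of the event.\<close>
definition walk_prob :: "'a set \<Rightarrow> ('a \<Rightarrow> 'a \<Rightarrow> bool) \<Rightarrow> 'a \<Rightarrow> nat \<Rightarrow> ('a list \<Rightarrow> bool) \<Rightarrow> real" where
  "walk_prob V E v m P =
     (\<Sum>xs\<in>{xs. length xs = Suc m \<and> set xs \<subseteq> V \<and> xs ! 0 = v}.
        (if P xs then (\<Prod>j<m. trans_prob E V (xs ! j) (xs ! Suc j)) else 0))"

end

theory Submission
  imports Defs
begin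

text \<open>Every transition probability is at most \<open>1 / (\<delta> n)\<close>, so after its first step the walk
  sits at any given vertex with probability at most \<open>1 / (\<delta> n)\<close>. Hence at every time
  \<open>t \<ge> 1\<close> the probability of crossing from \<open>V\<^sub>i\<close> to its complement is at most
  \<open>|E(V\<^sub>i, V - V\<^sub>i)| / (\<delta> n)\<^sup>2 \<le> \<epsilon>\<^sup>9 \<theta>\<^sup>2 / (\<delta>\<^sup>2 \<surd>n)\<close>, and a union bound over the at most
  \<open>C \<surd>n\<close> times gives the first claim. For the second, Markov's inequality shows that most of
  \<open>V\<^sub>i\<close> has few edges leaving \<open>V\<^sub>i\<close>; started there, the walk is also unlikely to cross at
  time 0.\<close>

definition walk_paths :: "'a set \<Rightarrow> 'a \<Rightarrow> nat \<Rightarrow> 'a list set" where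
  "walk_paths V v m = {xs. length xs = Suc m \<and> set xs \<subseteq> V \<and> xs ! 0 = v}"

definition path_weight :: "('a \<Rightarrow> 'a \<Rightarrow> bool) \<Rightarrow> 'a set \<Rightarrow> nat \<Rightarrow> 'a list \<Rightarrow> real" where
  "path_weight E V m xs = (\<Prod>j<m. trans_prob E V (xs ! j) (xs ! Suc j))"

lemma walk_prob_eq_sum_walk_paths:
  "walk_prob V E v m P = (\<Sum>xs\<in>walk_paths V v m. if P xs then path_weight E V m xs else 0)"
  unfolding walk_prob_def walk_paths_def path_weight_def by simp

lemma finite_walk_paths: "finite V \<Longrightarrow> finite (walk_paths V v m)"
  unfolding walk_paths_def
  by (rule finite_subset[OF _ finite_lists_length_eq[of V "Suc m"]]) auto

lemma walk_paths_Suc: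
  assumes "v \<in> V"
  shows "walk_paths V v (Suc m) = Cons v ` (\<Union>w\<in>V. walk_paths V w m)"
proof
  show "walk_paths V v (Suc m) \<subseteq> Cons v ` (\<Union>w\<in>V. walk_paths V w m)"
  proof
    fix xs assume "xs \<in> walk_paths V v (Suc m)"
    then obtain zs where xs: "xs = v # zs" and zs: "length zs = Suc m" "set zs \<subseteq> V"
      unfolding walk_paths_def by (cases xs) auto
    then have "zs ! 0 \<in> V" "zs \<in> walk_paths V (zs ! 0) m"
      unfolding walk_paths_def by (auto intro: nth_mem)
    then show "xs \<in> Cons v ` (\<Union>w\<in>V. walk_paths V w m)" using xs by blast
  qed
  show "Cons v ` (\<Union>w\<in>V. walk_paths V w m) \<subseteq> walk_paths V v (Suc m)"
    using assms unfolding walk_paths_def by auto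
qed

lemma walk_paths_outside: "v \<notin> V \<Longrightarrow> walk_paths V v m = {}"
  unfolding walk_paths_def by (force dest: nth_mem[of 0])

lemma trans_prob_nonneg: "0 \<le> trans_prob E V u w"
  unfolding trans_prob_def by simp

lemma path_weight_nonneg: "0 \<le> path_weight E V m xs"
  unfolding path_weight_def by (intro prod_nonneg) (simp add: trans_prob_nonneg)

lemma walk_prob_nonneg: "0 \<le> walk_prob V E v m P"
  unfolding walk_prob_eq_sum_walk_paths by (intro sum_nonneg) (simp add: path_weight_nonneg)

lemma walk_prob_cong:
  "(\<And>xs. xs \<in> walk_paths V v m \<Longrightarrow> P xs = Q xs) \<Longrightarrow> walk_prob V E v m P = walk_prob V E v m Q"
  unfolding walk_prob_eq_sum_walk_paths by (intro sum.cong) auto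

lemma walk_prob_add_compl:
  "walk_prob V E v m P + walk_prob V E v m (\<lambda>xs. \<not> P xs) = walk_prob V E v m (\<lambda>_. True)"
  unfolding walk_prob_eq_sum_walk_paths sum.distrib[symmetric] by (intro sum.cong) auto

lemma walk_prob_union_bound:
  assumes "finite T" and "\<And>xs. xs \<in> walk_paths V v m \<Longrightarrow> P xs \<Longrightarrow> \<exists>t\<in>T. Q t xs"
  shows "walk_prob V E v m P \<le> (\<Sum>t\<in>T. walk_prob V E v m (Q t))"
proof -
  have "(if P xs then path_weight E V m xs else 0)
      \<le> (\<Sum>t\<in>T. if Q t xs then path_weight E V m xs else 0)"
    if xs: "xs \<in> walk_paths V v m" for xs
  proof (cases "P xs")
    case True
    then obtain t where "t \<in> T" "Q t xs" using assms(2) xs by blast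
    then show ?thesis
      using True member_le_sum[OF \<open>t \<in> T\<close> _ assms(1), of "\<lambda>t. if Q t xs then path_weight E V m xs else 0"]
      by (simp add: path_weight_nonneg)
  qed (simp add: sum_nonneg path_weight_nonneg)
  then show ?thesis
    unfolding walk_prob_eq_sum_walk_paths by (subst sum.swap) (intro sum_mono)
qed

lemma walk_prob_Suc:
  assumes "finite V"
  shows "walk_prob V E v (Suc m) P
      = (\<Sum>w\<in>V. trans_prob E V v w * walk_prob V E w m (\<lambda>zs. P (v # zs)))"
proof (cases "v \<in> V")
  case False
  then show ?thesis
    by (simp add: walk_prob_eq_sum_walk_paths walk_paths_outside trans_prob_def)
next
  case True
  have weight_Cons: "path_weight E V (Suc m) (v # zs) = trans_prob E V v (zs ! 0) * path_weight E V m zs"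
    for zs unfolding path_weight_def by (subst prod.lessThan_Suc_shift) simp
  have disjoint: "\<forall>w\<in>V. \<forall>w'\<in>V. w \<noteq> w' \<longrightarrow> walk_paths V w m \<inter> walk_paths V w' m = {}"
    unfolding walk_paths_def by blast
  have "walk_prob V E v (Suc m) P
      = (\<Sum>zs\<in>(\<Union>w\<in>V. walk_paths V w m). if P (v # zs) then path_weight E V (Suc m) (v # zs) else 0)"
    unfolding walk_prob_eq_sum_walk_paths walk_paths_Suc[OF True]
    by (subst sum.reindex) (auto simp del: UN_iff)
  also have "\<dots> = (\<Sum>w\<in>V. \<Sum>zs\<in>walk_paths V w m.
                     if P (v # zs) then path_weight E V (Suc m) (v # zs) else 0)"
    using assms disjoint by (intro sum.UNION_disjoint) (auto simp: finite_walk_paths)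
  also have "\<dots> = (\<Sum>w\<in>V. trans_prob E V v w * walk_prob V E w m (\<lambda>zs. P (v # zs)))"
    unfolding walk_prob_eq_sum_walk_paths sum_distrib_left
    by (intro sum.cong refl) (auto simp: weight_Cons walk_paths_def)
  finally show ?thesis .
qed

lemma sum_trans_prob:
  assumes "finite V" and "u \<in> V" and "U \<subseteq> V"
  shows "(\<Sum>w\<in>U. trans_prob E V u w) = real (deg_in E u U) / real (deg_in E u V)"
proof -
  have "finite U" using assms finite_subset by blast
  have "(\<Sum>w\<in>U. trans_prob E V u w) = (\<Sum>w\<in>U. if E u w then 1 / real (deg_in E u V) else 0)"
    using assms unfolding trans_prob_def by (intro sum.cong) auto
  also have "\<dots> = (\<Sum>w\<in>{w \<in> U. E u w}. 1 / real (deg_in E u V))"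
    by (rule sum.inter_filter[OF \<open>finite U\<close>, symmetric])
  also have "\<dots> = real (deg_in E u U) / real (deg_in E u V)"
    by (simp add: deg_in_def)
  finally show ?thesis .
qed

lemma sum_deg_in_eq_card_edges_between:
  assumes "finite A" and "finite B"
  shows "(\<Sum>u\<in>A. real (deg_in E u B)) = real (card (edges_between E A B))"
proof -
  have "edges_between E A B = Sigma A (\<lambda>u. {w \<in> B. E u w})"
    unfolding edges_between_def by auto
  then show ?thesis using assms by (simp add: deg_in_def card_SigmaI)
qed

lemma card_high_deg_in_le:
  assumes "finite A" and "finite B"
  shows "T * real (card {u \<in> A. T < real (deg_in E u B)}) \<le> real (card (edges_between E A B))"
proof -
  let ?H = "{u \<in> A. T < real (deg_in E u B)}"
  have "T * real (card ?H) = (\<Sum>u\<in>?H. T)" by simp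
  also have "\<dots> \<le> (\<Sum>u\<in>?H. real (deg_in E u B))" by (intro sum_mono) auto
  also have "\<dots> \<le> (\<Sum>u\<in>A. real (deg_in E u B))" using assms(1) by (intro sum_mono2) auto
  finally show ?thesis using sum_deg_in_eq_card_edges_between[OF assms] by simp
qed

lemma of_nat_le_iff_le_nat_floor: "0 \<le> x \<Longrightarrow> real j \<le> x \<longleftrightarrow> j \<le> nat \<lfloor>x\<rfloor>"
  by (metis le_nat_floor of_nat_floor order.trans of_nat_mono)

locale min_degree_walk =
  fixes V :: "'a set" and E :: "'a \<Rightarrow> 'a \<Rightarrow> bool" and d :: real
  assumes finite_vertices: "finite V"
    and min_degree_pos: "0 < d"
    and min_degree: "\<And>u. u \<in> V \<Longrightarrow> d \<le> real (deg_in E u V)"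
begin

lemma trans_prob_le: "trans_prob E V u w \<le> 1 / d"
  using min_degree[of u] min_degree_pos unfolding trans_prob_def by (simp add: frac_le)

lemma sum_trans_prob_eq_1: "u \<in> V \<Longrightarrow> (\<Sum>w\<in>V. trans_prob E V u w) = 1"
  using min_degree[of u] min_degree_pos by (simp add: sum_trans_prob[OF finite_vertices])

lemma walk_prob_True: "v \<in> V \<Longrightarrow> walk_prob V E v m (\<lambda>_. True) = 1"
proof (induction m arbitrary: v)
  case 0
  then have "walk_paths V v 0 = {[v]}"
    unfolding walk_paths_def by (auto simp: length_Suc_conv)
  then show ?case by (simp add: walk_prob_eq_sum_walk_paths path_weight_def)
next
  case (Suc m)
  then show ?case
    by (simp add: walk_prob_Suc[OF finite_vertices] sum_trans_prob_eq_1 cong: sum.cong)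
qed

lemma walk_prob_const: "v \<in> V \<Longrightarrow> walk_prob V E v m (\<lambda>_. b) = (if b then 1 else 0)"
  by (cases b) (simp_all add: walk_prob_True walk_prob_def[of V E v m "\<lambda>_. False"])

lemma walk_prob_exit_at_0_le:
  assumes "v \<in> V"
  shows "walk_prob V E v (Suc m) (\<lambda>xs. xs ! 0 \<in> A \<and> xs ! Suc 0 \<notin> A)
    \<le> real (deg_in E v (V - A)) / d"
proof -
  have step: "walk_prob V E w m (\<lambda>zs. v \<in> A \<and> zs ! 0 \<notin> A)
      = (if v \<in> A \<and> w \<notin> A then 1 else 0)" if "w \<in> V" for w
  proof -
    have "walk_prob V E w m (\<lambda>zs. v \<in> A \<and> zs ! 0 \<notin> A) = walk_prob V E w m (\<lambda>_. v \<in> A \<and> w \<notin> A)"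
      by (rule walk_prob_cong) (simp add: walk_paths_def)
    then show ?thesis using that by (simp add: walk_prob_const)
  qed
  have "walk_prob V E v (Suc m) (\<lambda>xs. xs ! 0 \<in> A \<and> xs ! Suc 0 \<notin> A)
      = (\<Sum>w\<in>V. if v \<in> A \<and> w \<notin> A then trans_prob E V v w else 0)"
    unfolding walk_prob_Suc[OF finite_vertices] by (intro sum.cong) (auto simp: step)
  also have "\<dots> \<le> (\<Sum>w\<in>V - A. trans_prob E V v w)"
  proof (cases "v \<in> A")
    case True
    then show ?thesis
      using finite_vertices by (simp add: sum.inter_filter[symmetric] set_diff_eq)
  qed (simp add: sum_nonneg trans_prob_nonneg)
  also have "\<dots> = real (deg_in E v (V - A)) / real (deg_in E v V)"
    using assms by (intro sum_trans_prob finite_vertices) auto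
  also have "\<dots> \<le> real (deg_in E v (V - A)) / d"
    using min_degree[OF assms] min_degree_pos by (intro divide_left_mono) auto
  finally show ?thesis .
qed

text \<open>At every time \<open>t + 1 \<ge> 1\<close> the walk sits at any given vertex with probability at most
  \<open>1 / d\<close>, because every transition probability is at most \<open>1 / d\<close>.\<close>

lemma walk_prob_drop_le:
  assumes "v \<in> V"
  shows "walk_prob V E v (Suc (t + m)) (\<lambda>xs. P (drop (Suc t) xs))
    \<le> (\<Sum>w\<in>V. walk_prob V E w m P) / d"
  using assms
proof (induction t arbitrary: v)
  case 0
  have "walk_prob V E v (Suc m) (\<lambda>xs. P (drop 1 xs)) = (\<Sum>w\<in>V. trans_prob E V v w * walk_prob V E w m P)"
    by (subst walk_prob_Suc[OF finite_vertices]) simp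
  also have "\<dots> \<le> (\<Sum>w\<in>V. 1 / d * walk_prob V E w m P)"
    by (intro sum_mono mult_right_mono trans_prob_le walk_prob_nonneg)
  finally show ?case by (simp add: sum_divide_distrib)
next
  case (Suc t)
  have "walk_prob V E v (Suc (Suc t + m)) (\<lambda>xs. P (drop (Suc (Suc t)) xs))
      = (\<Sum>w\<in>V. trans_prob E V v w * walk_prob V E w (Suc (t + m)) (\<lambda>zs. P (drop (Suc t) zs)))"
    by (subst walk_prob_Suc[OF finite_vertices]) simp
  also have "\<dots> \<le> (\<Sum>w\<in>V. trans_prob E V v w * ((\<Sum>w\<in>V. walk_prob V E w m P) / d))"
    by (intro sum_mono mult_left_mono Suc.IH trans_prob_nonneg)
  also have "\<dots> = (\<Sum>w\<in>V. trans_prob E V v w) * ((\<Sum>w\<in>V. walk_prob V E w m P) / d)"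
    by (simp only: sum_distrib_right)
  also have "\<dots> = (\<Sum>w\<in>V. walk_prob V E w m P) / d"
    using sum_trans_prob_eq_1[OF Suc.prems] by simp
  finally show ?case .
qed

lemma walk_prob_exit_at_le:
  assumes "A \<subseteq> V" and "v \<in> V" and "0 < t" and "t < m"
  shows "walk_prob V E v m (\<lambda>xs. xs ! t \<in> A \<and> xs ! Suc t \<notin> A)
    \<le> real (card (edges_between E A (V - A))) / d\<^sup>2"
proof -
  obtain t' m' where t: "t = Suc t'" and m: "m = Suc (t' + Suc m')"
    using assms(3,4) by (intro that[of "t - 1" "m - t - 1"]) auto
  let ?exit = "\<lambda>zs. zs ! 0 \<in> A \<and> zs ! Suc 0 \<notin> A"
  have "walk_prob V E v m (\<lambda>xs. xs ! t \<in> A \<and> xs ! Suc t \<notin> A)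
      = walk_prob V E v m (\<lambda>xs. ?exit (drop t xs))"
    by (rule walk_prob_cong) (use assms(4) in \<open>simp add: walk_paths_def\<close>)
  also have "\<dots> \<le> (\<Sum>w\<in>V. walk_prob V E w (Suc m') ?exit) / d"
    unfolding m t by (rule walk_prob_drop_le[OF assms(2)])
  also have "\<dots> \<le> (\<Sum>w\<in>A. real (deg_in E w (V - A)) / d) / d"
  proof -
    have "walk_prob V E w (Suc m') ?exit = walk_prob V E w (Suc m') (\<lambda>_. False)" if "w \<notin> A" for w
      by (rule walk_prob_cong) (simp add: walk_paths_def that)
    then have "walk_prob V E w (Suc m') ?exit = 0" if "w \<in> V - A" for w
      using that by (simp add: walk_prob_const)
    then have "(\<Sum>w\<in>V. walk_prob V E w (Suc m') ?exit) = (\<Sum>w\<in>A. walk_prob V E w (Suc m') ?exit)"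
      using assms(1) finite_vertices by (intro sum.mono_neutral_right) auto
    also have "\<dots> \<le> (\<Sum>w\<in>A. real (deg_in E w (V - A)) / d)"
      using assms(1) by (intro sum_mono walk_prob_exit_at_0_le) auto
    finally show ?thesis using min_degree_pos by (simp add: divide_right_mono)
  qed
  also have "\<dots> = (\<Sum>w\<in>A. real (deg_in E w (V - A))) / d\<^sup>2"
    by (simp add: sum_divide_distrib power2_eq_square)
  also have "\<dots> = real (card (edges_between E A (V - A))) / d\<^sup>2"
    using assms(1) finite_vertices finite_subset by (subst sum_deg_in_eq_card_edges_between) auto
  finally show ?thesis .
qed

lemma walk_prob_exit_between_le:
  assumes "A \<subseteq> V" and "v \<in> V"
  shows "walk_prob V E v (Suc N) (\<lambda>xs. \<exists>t. 1 \<le> t \<and> t \<le> N \<and> xs ! t \<in> A \<and> xs ! Suc t \<notin> A)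
    \<le> real N * real (card (edges_between E A (V - A))) / d\<^sup>2"
proof -
  have "walk_prob V E v (Suc N) (\<lambda>xs. \<exists>t. 1 \<le> t \<and> t \<le> N \<and> xs ! t \<in> A \<and> xs ! Suc t \<notin> A)
      \<le> (\<Sum>t\<in>{1..N}. walk_prob V E v (Suc N) (\<lambda>xs. xs ! t \<in> A \<and> xs ! Suc t \<notin> A))"
    by (rule walk_prob_union_bound) auto
  also have "\<dots> \<le> (\<Sum>t\<in>{1..N}. real (card (edges_between E A (V - A))) / d\<^sup>2)"
    using assms by (intro sum_mono walk_prob_exit_at_le) auto
  finally show ?thesis by simp
qed

lemma walk_prob_stay_ge:
  assumes "A \<subseteq> V" and "v \<in> A"
  shows "1 - real N * (real (deg_in E v (V - A)) / d + real (card (edges_between E A (V - A))) / d\<^sup>2)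
    \<le> walk_prob V E v N (\<lambda>xs. \<forall>j\<le>N. xs ! j \<in> A)"
proof -
  let ?exit_at = "\<lambda>t xs. xs ! t \<in> A \<and> xs ! Suc t \<notin> A"
  let ?bound = "real (deg_in E v (V - A)) / d + real (card (edges_between E A (V - A))) / d\<^sup>2"
  have v: "v \<in> V" using assms by blast
  have "walk_prob V E v N (\<lambda>xs. \<not> (\<forall>j\<le>N. xs ! j \<in> A))
      \<le> (\<Sum>t<N. walk_prob V E v N (?exit_at t))"
  proof (rule walk_prob_union_bound)
    fix xs assume "xs \<in> walk_paths V v N" and "\<not> (\<forall>j\<le>N. xs ! j \<in> A)"
    then obtain j where "j \<le> N" "xs ! j \<notin> A" "xs ! 0 \<in> A"
      using assms(2) unfolding walk_paths_def by auto
    then obtain k where k: "k \<le> N" "xs ! k \<notin> A" "\<forall>i<k. xs ! i \<in> A"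
      using ex_least_nat_le[of "\<lambda>i. xs ! i \<notin> A" j] by (blast intro: order.trans)
    with \<open>xs ! 0 \<in> A\<close> obtain t where "k = Suc t" by (cases k) auto
    with k show "\<exists>t\<in>{..<N}. ?exit_at t xs" by (intro bexI[of _ t]) auto
  qed simp
  also have "\<dots> \<le> (\<Sum>t<N. ?bound)"
  proof (intro sum_mono)
    fix t assume "t \<in> {..<N}"
    then obtain m where N: "N = Suc m" and "t \<le> m" by (cases N) auto
    show "walk_prob V E v N (?exit_at t) \<le> ?bound"
    proof (cases "t = 0")
      case True
      then show ?thesis
        using walk_prob_exit_at_0_le[OF v, of m A] unfolding N by (intro add_increasing2) simp_all
    next
      case False
      then show ?thesis
        using walk_prob_exit_at_le[OF assms(1) v, of t N] \<open>t \<le> m\<close> min_degree_pos unfolding N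
        by (intro add_increasing) simp_all
    qed
  qed
  finally show ?thesis
    using walk_prob_add_compl[of V E v N "\<lambda>xs. \<forall>j\<le>N. xs ! j \<in> A"] walk_prob_True[OF v] by simp
qed

lemma walk_prob_exit_sqrt_time_le:
  fixes \<delta> C D :: real
  defines "n \<equiv> real (card V)"
  assumes "A \<subseteq> V" and "v \<in> V" and "d = \<delta> * n" and "0 \<le> C"
    and edges: "real (card (edges_between E A (V - A))) \<le> D * (n * sqrt n)"
  shows "walk_prob V E v (nat \<lfloor>C * sqrt n\<rfloor> + 1)
      (\<lambda>xs. \<exists>t. 1 \<le> t \<and> real t \<le> C * sqrt n \<and> xs ! t \<in> A \<and> xs ! (t + 1) \<notin> A)
    \<le> C * D / \<delta>\<^sup>2"
proof -
  define N where "N = nat \<lfloor>C * sqrt n\<rfloor>"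
  have "0 < n" "0 < \<delta>"
    using min_degree_pos \<open>d = \<delta> * n\<close> by (auto simp: n_def zero_less_mult_iff)
  have "0 \<le> C * sqrt n" using \<open>0 \<le> C\<close> by (simp add: n_def)
  have "0 < n * sqrt n" using \<open>0 < n\<close> by simp
  moreover have "0 \<le> D * (n * sqrt n)" using edges of_nat_0_le_iff order_trans by blast
  ultimately have "0 \<le> D" by (simp add: zero_le_mult_iff)
  have "walk_prob V E v (Suc N)
      (\<lambda>xs. \<exists>t. 1 \<le> t \<and> real t \<le> C * sqrt n \<and> xs ! t \<in> A \<and> xs ! (t + 1) \<notin> A)
    \<le> real N * real (card (edges_between E A (V - A))) / d\<^sup>2"
    using walk_prob_exit_between_le[OF assms(2,3), of N]
    by (simp add: N_def of_nat_le_iff_le_nat_floor[OF \<open>0 \<le> C * sqrt n\<close>])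
  also have "\<dots> \<le> (C * sqrt n) * (D * (n * sqrt n)) / d\<^sup>2"
    using \<open>0 \<le> C * sqrt n\<close> edges
    by (intro divide_right_mono mult_mono) (simp_all add: N_def of_nat_floor)
  also have "\<dots> = C * D / \<delta>\<^sup>2"
    using \<open>0 < n\<close> \<open>0 < \<delta>\<close> \<open>d = \<delta> * n\<close> by (simp add: field_simps power2_eq_square)
  finally show ?thesis by (simp add: N_def)
qed

text \<open>By Markov's inequality at most \<open>\<delta> n / 4\<close> vertices of \<open>A\<close> have out-degree above
  \<open>4 D \<surd>n / \<delta>\<close>; from the remaining ones even the first step rarely leaves \<open>A\<close>.\<close>

lemma exists_large_subset_stay_sqrt_time:
  fixes \<delta> C D :: real
  defines "n \<equiv> real (card V)"
  assumes "A \<subseteq> V" and "d = \<delta> * n" and "\<delta> \<le> 1" and "0 < C" and "0 < D"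
    and large: "\<delta> * n / 2 \<le> real (card A)"
    and edges: "real (card (edges_between E A (V - A))) \<le> D * (n * sqrt n)"
  shows "\<exists>A'. A' \<subseteq> A \<and> \<delta> ^ 4 * n / 80 \<le> real (card A') \<and>
    (\<forall>v\<in>A'. 1 - 80 * C * D / \<delta> ^ 6
       \<le> walk_prob V E v (nat \<lfloor>C * sqrt n\<rfloor>) (\<lambda>xs. \<forall>j. real j \<le> C * sqrt n \<longrightarrow> xs ! j \<in> A))"
proof -
  define s where "s = sqrt n"
  define N where "N = nat \<lfloor>C * s\<rfloor>"
  define T where "T = 4 * D * s / \<delta>"
  define A' where "A' = {v \<in> A. real (deg_in E v (V - A)) \<le> T}"
  define H where "H = {v \<in> A. T < real (deg_in E v (V - A))}"
  let ?edges = "real (card (edges_between E A (V - A)))"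
  have "0 < n" "0 < \<delta>"
    using min_degree_pos \<open>d = \<delta> * n\<close> by (auto simp: n_def zero_less_mult_iff)
  have "0 < s" and n_eq: "n = s\<^sup>2" using \<open>0 < n\<close> by (simp_all add: s_def)
  have d_eq: "d = \<delta> * s\<^sup>2" using \<open>d = \<delta> * n\<close> n_eq by simp
  have "0 < T" using \<open>0 < D\<close> \<open>0 < s\<close> \<open>0 < \<delta>\<close> by (simp add: T_def)
  have "0 \<le> C * s" using \<open>0 < C\<close> \<open>0 < s\<close> by simp
  have "finite A" using assms(2) finite_vertices finite_subset by blast
  have "T * real (card H) \<le> ?edges"
    using card_high_deg_in_le[OF \<open>finite A\<close>, of "V - A" T E] finite_vertices by (simp add: H_def)
  also have "\<dots> \<le> \<delta> * n / 4 * T"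
    using edges \<open>0 < \<delta>\<close> by (simp add: T_def s_def mult_ac)
  finally have "real (card H) \<le> \<delta> * n / 4"
    using \<open>0 < T\<close> by (simp add: mult.commute[of T])
  moreover have "card A' + card H = card A"
    using \<open>finite A\<close> unfolding A'_def H_def
    by (subst card_Un_disjoint[symmetric]) (auto intro: arg_cong[of _ _ card])
  moreover have "\<delta> ^ 4 \<le> \<delta>"
    using \<open>0 < \<delta>\<close> \<open>\<delta> \<le> 1\<close> by (simp add: power_le_one power_decreasing[of 1 4, simplified])
  ultimately have "\<delta> ^ 4 * n / 80 \<le> real (card A')"
    using large \<open>0 < n\<close> mult_right_mono[of "\<delta> ^ 4" \<delta> n] by linarith
  moreover have "1 - 80 * C * D / \<delta> ^ 6
      \<le> walk_prob V E v N (\<lambda>xs. \<forall>j. real j \<le> C * s \<longrightarrow> xs ! j \<in> A)" if "v \<in> A'" for v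
  proof -
    have "real (deg_in E v (V - A)) / d \<le> T / d"
      using that min_degree_pos by (simp add: A'_def divide_right_mono)
    also have "\<dots> = 4 * D / (\<delta>\<^sup>2 * s)"
      using \<open>0 < \<delta>\<close> \<open>0 < s\<close> by (simp add: T_def d_eq field_simps power2_eq_square)
    finally have "real (deg_in E v (V - A)) / d \<le> 4 * D / (\<delta>\<^sup>2 * s)" .
    moreover have "?edges / d\<^sup>2 \<le> D * (n * s) / d\<^sup>2"
      using edges by (simp add: s_def divide_right_mono)
    moreover have "D * (n * s) / d\<^sup>2 = D / (\<delta>\<^sup>2 * s)"
      using \<open>0 < \<delta>\<close> \<open>0 < s\<close> by (simp add: d_eq n_eq field_simps power2_eq_square)
    ultimately have "real (deg_in E v (V - A)) / d + ?edges / d\<^sup>2 \<le> 5 * D / (\<delta>\<^sup>2 * s)"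
      by (simp add: add_divide_distrib[symmetric])
    then have "real N * (real (deg_in E v (V - A)) / d + ?edges / d\<^sup>2) \<le> C * s * (5 * D / (\<delta>\<^sup>2 * s))"
      using \<open>0 \<le> C * s\<close> min_degree_pos by (intro mult_mono) (simp_all add: N_def of_nat_floor)
    also have "\<dots> = 5 * C * D / \<delta>\<^sup>2"
      using \<open>0 < s\<close> by simp
    also have "\<dots> \<le> 80 * C * D / \<delta> ^ 6"
    proof (rule frac_le)
      show "\<delta> ^ 6 \<le> \<delta>\<^sup>2"
        using \<open>0 < \<delta>\<close> \<open>\<delta> \<le> 1\<close> by (intro power_decreasing) auto
    qed (use \<open>0 < C\<close> \<open>0 < D\<close> \<open>0 < \<delta>\<close> in simp_all)
    finally show ?thesis
      using walk_prob_stay_ge[OF assms(2), of v N] that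
      by (simp add: A'_def N_def of_nat_le_iff_le_nat_floor[OF \<open>0 \<le> C * s\<close>])
  qed
  ultimately show ?thesis
    unfolding N_def s_def by (intro exI[of _ A']) (auto simp: A'_def)
qed

end

lemma powr_three_halves: "0 \<le> x \<Longrightarrow> x powr 1.5 = x * sqrt (x::real)"
  using powr_add[of x 1 "1 / 2"] by (simp add: powr_half_sqrt)

lemma good_decomposition_parameter_pos:
  "good_decomposition V E \<epsilon> \<delta> \<beta> k Vs \<theta> \<Longrightarrow> 0 < \<theta>"
  unfolding good_decomposition_def Let_def by (smt (verit) powr_gt_zero)

lemma good_decomposition_block:
  assumes "good_decomposition V E \<epsilon> \<delta> \<beta> k Vs \<theta>" and "i \<in> {1..k}"
  shows "Vs i \<subseteq> V" and "\<delta> * real (card V) / 2 \<le> real (card (Vs i))"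
    and "real (card (edges_between E (Vs i) (V - Vs i))) \<le> \<epsilon> ^ 9 * \<theta>\<^sup>2 * \<beta>"
  using assms unfolding good_decomposition_def Let_def by auto

theorem lemma3p5:
  fixes V :: "'a::linorder set" and E :: "'a \<Rightarrow> 'a \<Rightarrow> bool"
    and \<delta> \<epsilon> \<theta> :: real and k :: nat and Vs :: "nat \<Rightarrow> 'a set"
  assumes "simple_graph V E"
    and "0 < \<delta>" and "\<delta> \<le> 1" and "0 < \<epsilon>"
    and "\<forall>v\<in>V. real (deg_in E v V) \<ge> \<delta> * real (card V)"
    and "good_decomposition V E \<epsilon> \<delta> (real (card V) powr 1.5) k Vs \<theta>"
  shows "(\<forall>C>0. \<forall>i\<in>{1..k}. \<forall>v\<in>V.
            walk_prob V E v (nat \<lfloor>C * sqrt (card V)\<rfloor> + 1)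
              (\<lambda>xs. \<exists>t. 1 \<le> t \<and> real t \<le> C * sqrt (card V) \<and>
                        xs ! t \<in> Vs i \<and> xs ! (t + 1) \<notin> Vs i)
            \<le> C * \<theta>\<^sup>2 * \<epsilon> ^ 9 / \<delta>\<^sup>2)
       \<and> (\<forall>C>0. \<forall>i\<in>{1..k}. \<exists>V'. V' \<subseteq> Vs i \<and>
            real (card V') \<ge> \<delta> ^ 4 * real (card V) / 80 \<and>
            (\<forall>v\<in>V'. walk_prob V E v (nat \<lfloor>C * sqrt (card V)\<rfloor>)
                       (\<lambda>xs. \<forall>j. real j \<le> C * sqrt (card V) \<longrightarrow> xs ! j \<in> Vs i)
                     \<ge> 1 - 80 * C * \<theta>\<^sup>2 * \<epsilon> ^ 9 / \<delta> ^ 6))"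
proof -
  let ?n = "real (card V)"
  define D where "D = \<theta>\<^sup>2 * \<epsilon> ^ 9"
  have "0 < ?n powr 1.5"
    using assms(6) unfolding good_decomposition_def Let_def by blast
  then have "0 < ?n" by simp
  have "0 < D"
    using good_decomposition_parameter_pos[OF assms(6)] assms(4) by (simp add: D_def)
  interpret min_degree_walk V E "\<delta> * ?n"
    using assms(1,2,5) \<open>0 < ?n\<close> by unfold_locales (auto simp: simple_graph_def)
  have block: "Vs i \<subseteq> V" "\<delta> * ?n / 2 \<le> real (card (Vs i))"
      "real (card (edges_between E (Vs i) (V - Vs i))) \<le> D * (?n * sqrt ?n)" if "i \<in> {1..k}" for i
    using good_decomposition_block[OF assms(6) that] powr_three_halves[of ?n]
    by (simp_all add: D_def mult_ac)
  show ?thesis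
    using walk_prob_exit_sqrt_time_le[OF block(1) _ refl _ block(3)]
      exists_large_subset_stay_sqrt_time[OF block(1) refl assms(3) _ \<open>0 < D\<close> block(2,3)]
    by (simp add: D_def mult_ac)
qed

end
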